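(* Let $\Gamma$ be a set of clauses with designated blocking variables. If $C\lor\ell$ is cost-BC with respect to $\Gamma$ and the literal $\ell$, then $\mathrm{cost}(\Gamma)=\mathrm{cost}(\Gamma\cup\{C\lor\ell\})$.
   Context: For a CNF $\Gamma$ with designated blocking variables $b_1,\dots,b_m$: for a total assignment $\alpha$, $\mathrm{cost}(\alpha)=\sum_i\alpha(b_i)$, and $\mathrm{cost}(\Gamma)=\min\{\mathrm{cost}(\alpha):\alpha\text{ total},\ \alpha\models\Gamma\}$. A clause $C\lor\ell$ is cost-BC w.r.t. $\Gamma$ and the literal $\ell$ if for every clause of the form $D\lor\lnot\ell$ in $\Gamma$, $C\lor D$ is a tautology, and $\ell$ is not a blocking variable with positive polarity. *)

theory Defs
  imports Main "HOL-Library.Extended_Nat"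
begin

datatype 'v lit = Pos 'v | Neg 'v

fun neg :: "'v lit \<Rightarrow> 'v lit" where
  "neg (Pos v) = Neg v"
| "neg (Neg v) = Pos v"

type_synonym 'v clause = "'v lit set"
type_synonym 'v cnf = "'v clause set"

fun lit_sat :: "('v \<Rightarrow> bool) \<Rightarrow> 'v lit \<Rightarrow> bool" where
  "lit_sat \<alpha> (Pos v) = \<alpha> v"
| "lit_sat \<alpha> (Neg v) = (\<not> \<alpha> v)"

definition clause_sat :: "('v \<Rightarrow> bool) \<Rightarrow> 'v clause \<Rightarrow> bool" where
  "clause_sat \<alpha> C \<longleftrightarrow> (\<exists>l\<in>C. lit_sat \<alpha> l)"

definition cnf_sat :: "('v \<Rightarrow> bool) \<Rightarrow> 'v cnf \<Rightarrow> bool" where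
  "cnf_sat \<alpha> \<Gamma> \<longleftrightarrow> (\<forall>C\<in>\<Gamma>. clause_sat \<alpha> C)"

definition tautology :: "'v clause \<Rightarrow> bool" where
  "tautology C \<longleftrightarrow> (\<exists>l\<in>C. neg l \<in> C)"

(* B = the (finite) set of designated blocking variables *)
definition assign_cost :: "'v set \<Rightarrow> ('v \<Rightarrow> bool) \<Rightarrow> nat" where
  "assign_cost B \<alpha> = card {b\<in>B. \<alpha> b}"

(* minimum cost of a satisfying total assignment; \<infinity> if unsatisfiable *)
definition cnf_cost :: "'v set \<Rightarrow> 'v cnf \<Rightarrow> enat" where
  "cnf_cost B \<Gamma> = (INF \<alpha>\<in>{\<alpha>. cnf_sat \<alpha> \<Gamma>}. enat (assign_cost B \<alpha>))"

(* C \<or> l, as a clause, is insert l C *)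
definition cost_BC :: "'v set \<Rightarrow> 'v cnf \<Rightarrow> 'v clause \<Rightarrow> 'v lit \<Rightarrow> bool" where
  "cost_BC B \<Gamma> C l \<longleftrightarrow>
     (\<forall>D. insert (neg l) D \<in> \<Gamma> \<longrightarrow> tautology (C \<union> D))
     \<and> \<not> (\<exists>b\<in>B. l = Pos b)"

end

theory Submission
  imports Defs
begin

text \<open>Every model \<alpha> of \<Gamma> that falsifies C \<or> l can be repaired by making l true.
  A clause of \<Gamma> without \<not>l keeps its true literal. A clause \<not>l \<or> D resolves with
  C \<or> l to the tautology C \<or> D; since \<alpha> falsifies C, it must satisfy D, which the
  flip leaves untouched. The flip costs nothing because l is not a positive blocking
  literal, so the extra clause does not raise the minimum cost; it cannot lower it
  either, since it only removes models.\<close>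

definition set_lit :: "('v \<Rightarrow> bool) \<Rightarrow> 'v lit \<Rightarrow> 'v \<Rightarrow> bool" where
  "set_lit \<alpha> l = (case l of Pos v \<Rightarrow> \<alpha>(v := True) | Neg v \<Rightarrow> \<alpha>(v := False))"

lemma lit_sat_neg [simp]: "lit_sat \<alpha> (neg k) \<longleftrightarrow> \<not> lit_sat \<alpha> k"
  by (cases k) auto

lemma lit_sat_set_lit_self: "lit_sat (set_lit \<alpha> l) l"
  by (cases l) (auto simp: set_lit_def)

lemma lit_sat_set_lit_other: "k \<noteq> neg l \<Longrightarrow> lit_sat \<alpha> k \<Longrightarrow> lit_sat (set_lit \<alpha> l) k"
  by (cases l; cases k) (auto simp: set_lit_def)

lemma clause_sat_set_lit:
  "clause_sat \<alpha> (E - {neg l}) \<Longrightarrow> clause_sat (set_lit \<alpha> l) E"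
  unfolding clause_sat_def by (blast intro: lit_sat_set_lit_other)

lemma clause_sat_if_tautology_Un:
  assumes "tautology (C \<union> D)" and "\<not> clause_sat \<alpha> C"
  shows "clause_sat \<alpha> D"
proof -
  obtain k where k: "k \<in> C \<union> D" "neg k \<in> C \<union> D"
    using assms(1) by (auto simp: tautology_def)
  have "lit_sat \<alpha> k \<or> lit_sat \<alpha> (neg k)"
    by simp
  then show ?thesis
    using k assms(2) unfolding clause_sat_def by blast
qed

lemma cnf_sat_set_lit_if_blocked:
  assumes blocked: "\<forall>D. insert (neg l) D \<in> \<Gamma> \<longrightarrow> tautology (C \<union> D)"
    and sat: "cnf_sat \<alpha> \<Gamma>" and unsat: "\<not> clause_sat \<alpha> (insert l C)"
  shows "cnf_sat (set_lit \<alpha> l) (\<Gamma> \<union> {insert l C})"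
  unfolding cnf_sat_def
proof
  fix E assume "E \<in> \<Gamma> \<union> {insert l C}"
  then consider "E = insert l C" | "E \<in> \<Gamma>"
    by blast
  then show "clause_sat (set_lit \<alpha> l) E"
  proof cases
    case 1
    then show ?thesis
      using lit_sat_set_lit_self by (auto simp: clause_sat_def)
  next
    case 2
    have "clause_sat \<alpha> (E - {neg l})"
    proof (cases "neg l \<in> E")
      case True
      then have "insert (neg l) (E - {neg l}) \<in> \<Gamma>"
        using 2 by (simp add: insert_absorb)
      then have "tautology (C \<union> (E - {neg l}))"
        using blocked by blast
      moreover have "\<not> clause_sat \<alpha> C"
        using unsat by (auto simp: clause_sat_def)
      ultimately show ?thesis
        by (rule clause_sat_if_tautology_Un)
    next
      case False
      then show ?thesis
        using 2 sat by (simp add: cnf_sat_def)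
    qed
    then show ?thesis
      by (rule clause_sat_set_lit)
  qed
qed

lemma assign_cost_set_lit_le:
  assumes "finite B" and "\<forall>b\<in>B. l \<noteq> Pos b"
  shows "assign_cost B (set_lit \<alpha> l) \<le> assign_cost B \<alpha>"
proof -
  have "{b\<in>B. set_lit \<alpha> l b} \<subseteq> {b\<in>B. \<alpha> b}"
    using assms(2) by (cases l) (auto simp: set_lit_def)
  then show ?thesis
    unfolding assign_cost_def using assms(1) by (simp add: card_mono)
qed

lemma cnf_cost_mono: "\<Gamma> \<subseteq> \<Gamma>' \<Longrightarrow> cnf_cost B \<Gamma> \<le> cnf_cost B \<Gamma>'"
  unfolding cnf_cost_def by (rule INF_superset_mono) (auto simp: cnf_sat_def)

lemma cnf_cost_le_if_cheaper_models:
  assumes "\<And>\<alpha>. cnf_sat \<alpha> \<Gamma> \<Longrightarrow> \<exists>\<beta>. cnf_sat \<beta> \<Gamma>' \<and> assign_cost B \<beta> \<le> assign_cost B \<alpha>"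
  shows "cnf_cost B \<Gamma>' \<le> cnf_cost B \<Gamma>"
  unfolding cnf_cost_def by (rule INF_mono) (use assms in auto)

theorem proposition3p5:
  fixes B :: "'v set" and \<Gamma> :: "'v cnf" and C :: "'v clause" and l :: "'v lit"
  assumes "finite B"
    and "cost_BC B \<Gamma> C l"
  shows "cnf_cost B \<Gamma> = cnf_cost B (\<Gamma> \<union> {insert l C})"
proof (rule antisym)
  show "cnf_cost B \<Gamma> \<le> cnf_cost B (\<Gamma> \<union> {insert l C})"
    by (rule cnf_cost_mono) blast
next
  have blocked: "\<forall>D. insert (neg l) D \<in> \<Gamma> \<longrightarrow> tautology (C \<union> D)"
    and not_blocking: "\<forall>b\<in>B. l \<noteq> Pos b"
    using assms(2) by (auto simp: cost_BC_def)
  show "cnf_cost B (\<Gamma> \<union> {insert l C}) \<le> cnf_cost B \<Gamma>"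
  proof (rule cnf_cost_le_if_cheaper_models)
    fix \<alpha> assume sat: "cnf_sat \<alpha> \<Gamma>"
    show "\<exists>\<beta>. cnf_sat \<beta> (\<Gamma> \<union> {insert l C}) \<and> assign_cost B \<beta> \<le> assign_cost B \<alpha>"
    proof (cases "clause_sat \<alpha> (insert l C)")
      case True
      with sat show ?thesis
        by (auto simp: cnf_sat_def)
    next
      case False
      with sat show ?thesis
        using cnf_sat_set_lit_if_blocked[OF blocked] assign_cost_set_lit_le[OF assms(1) not_blocking]
        by blast
    qed
  qed
qed

end
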